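(* Let $m\ge 2$, $\alpha\in[0,1]$, $\pi$ a permutation of $E_{m-1}=\{1,\dots,m-1\}$, $V_\alpha$ as defined below, and for $\mathbf{x}^{(0)}\in S^{m-1}$ let $\mathbf{x}^{(n+1)}=V_\alpha(\mathbf{x}^{(n)})$ and let $\omega(\mathbf{x}^{(0)})$ be the set of limit points of $(\mathbf{x}^{(n)})_{n\ge0}$. Let $\Gamma=\{\mathbf{x}\in S^{m-1}: x_m=0\}\cup\{\mathbf{e}_m\}$, $\mathbf{e}_m=(0,\dots,0,1)$. Then: (i) if $\mathbf{x}^{(0)}\in\Gamma$, then $\omega(\mathbf{x}^{(0)})=\{\mathbf{e}_m\}$; (ii) if $\alpha\in(0,1)$ and $\pi\ne\mathrm{Id}$, then for every $\mathbf{x}^{(0)}\in S^{m-1}\setminus(\Gamma\cup X)$ the trajectory converges: $\omega(\mathbf{x}^{(0)})=\{\mathbf{b}\}$ for some point $\mathbf{b}\in X$, where $X=\{\mathbf{x}\in S^{m-1}: x_k=x_l \text{ for all } k,l\in\mathrm{supp}(\tau_i),\ i=1,\dots,q,\ x_m=1/2\}$.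
   Context: $S^{m-1}=\{\mathbf{x}=(x_1,\dots,x_m)\in\mathbb{R}^m: x_i\ge 0,\ \sum_{i=1}^m x_i=1\}$. For a permutation $\pi$ of $E_{m-1}$, $\pi=\tau_1\cdots\tau_q$ is its decomposition into disjoint cycles of length $\ge 2$, and $\mathrm{supp}(\tau_i)$ is the set of elements moved by $\tau_i$. For $\alpha\in[0,1]$ the operator $V_\alpha\colon S^{m-1}\to S^{m-1}$ is $\mathbf{x}\mapsto\mathbf{x}'$ with $x'_k=2x_m(\alpha x_k+(1-\alpha)x_{\pi(k)})$ for $k=1,\dots,m-1$ and $x'_m=x_m^2+\big(\sum_{i=1}^{m-1}x_i\big)^2$. *)

theory Defs
  imports "HOL-Analysis.Analysis" "HOL-Combinatorics.Permutations"
begin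

(* Points of R^m are encoded as functions nat => real, coordinates 1..m,
   all other coordinates are 0. *)

definition simplexS :: "nat \<Rightarrow> (nat \<Rightarrow> real) set" where
  "simplexS m = {x. (\<forall>i\<in>{1..m}. 0 \<le> x i) \<and> (\<forall>i. i \<notin> {1..m} \<longrightarrow> x i = 0)
                   \<and> (\<Sum>i=1..m. x i) = 1}"

definition Vop :: "nat \<Rightarrow> real \<Rightarrow> (nat \<Rightarrow> nat) \<Rightarrow> (nat \<Rightarrow> real) \<Rightarrow> (nat \<Rightarrow> real)" where
  "Vop m \<alpha> \<pi> x = (\<lambda>k. if k \<in> {1..m-1} then 2 * x m * (\<alpha> * x k + (1 - \<alpha>) * x (\<pi> k))
                      else if k = m then (x m)^2 + (\<Sum>i=1..m-1. x i)^2
                      else 0)"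

definition traj :: "nat \<Rightarrow> real \<Rightarrow> (nat \<Rightarrow> nat) \<Rightarrow> (nat \<Rightarrow> real) \<Rightarrow> nat \<Rightarrow> (nat \<Rightarrow> real)" where
  "traj m \<alpha> \<pi> x0 n = (Vop m \<alpha> \<pi> ^^ n) x0"

(* set of limit points of the trajectory (coordinatewise/product topology) *)
definition omega_set :: "nat \<Rightarrow> real \<Rightarrow> (nat \<Rightarrow> nat) \<Rightarrow> (nat \<Rightarrow> real) \<Rightarrow> (nat \<Rightarrow> real) set" where
  "omega_set m \<alpha> \<pi> x0 = {b. \<exists>r. strict_mono r \<and> (traj m \<alpha> \<pi> x0 \<circ> r) \<longlonglongrightarrow> b}"

definition e_last :: "nat \<Rightarrow> (nat \<Rightarrow> real)" where
  "e_last m = (\<lambda>i. if i = m then 1 else 0)"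

definition Gamma :: "nat \<Rightarrow> (nat \<Rightarrow> real) set" where
  "Gamma m = {x \<in> simplexS m. x m = 0} \<union> {e_last m}"

(* k and l lie in the support of the same cycle of \<pi> (for k \<noteq> l) *)
definition same_cycle :: "(nat \<Rightarrow> nat) \<Rightarrow> nat \<Rightarrow> nat \<Rightarrow> bool" where
  "same_cycle \<pi> k l \<longleftrightarrow> (\<exists>n. (\<pi> ^^ n) k = l)"

definition Xset :: "nat \<Rightarrow> (nat \<Rightarrow> nat) \<Rightarrow> (nat \<Rightarrow> real) set" where
  "Xset m \<pi> = {x \<in> simplexS m. (\<forall>k\<in>{1..m-1}. \<forall>l\<in>{1..m-1}. same_cycle \<pi> k l \<longrightarrow> x k = x l)
                \<and> x m = 1/2}"

end

theory Submission
  imports Defs "HOL-Combinatorics.Cycles"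
begin

(* Write t = x_m and s = x_1 + ... + x_{m-1}; on the simplex t + s = 1, and V acts on t by
   t' = t^2 + (1 - t)^2, i.e. 2 t' - 1 = (2 t - 1)^2. Hence t tends to 1/2 unless t = 0, where
   V sends the point to the fixed point e_m, or t = 1, where the point is e_m itself.
   The first m - 1 coordinates satisfy x' = 2 t A x with A f k = alpha f k + (1 - alpha) f (pi k),
   so they are s_n / s_0 times A^n x. If pi^N = id, the discrete Fourier coefficients of x along
   the orbits of pi are eigenvectors of A with eigenvalues alpha + (1 - alpha) zeta, zeta an N-th
   root of unity. For 0 < alpha < 1 all of them except 1 have modulus < 1, so A^n x converges to
   the mean of x over the orbit of each index, which is constant on the cycles of pi. *)

lemma sum_lessThan_Suc_shift_periodic:
  fixes g :: "nat \<Rightarrow> 'a::cancel_comm_monoid_add"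
  assumes "g N = g 0"
  shows "(\<Sum>r<N. g (Suc r)) = (\<Sum>r<N. g r)"
proof -
  have "g 0 + (\<Sum>r<N. g (Suc r)) = (\<Sum>r<N. g r) + g N"
    by (metis sum.lessThan_Suc_shift sum.lessThan_Suc)
  then show ?thesis
    using assms by (simp add: add.commute)
qed

definition orbit_mean :: "nat \<Rightarrow> ('b \<Rightarrow> 'b) \<Rightarrow> ('b \<Rightarrow> 'a::field) \<Rightarrow> 'b \<Rightarrow> 'a" where
  "orbit_mean N p y k = (\<Sum>r<N. y ((p ^^ r) k)) / of_nat N"

lemma orbit_mean_shift:
  assumes "(p ^^ N) = id"
  shows "orbit_mean N p y (p k) = orbit_mean N p y k"
proof -
  have "(\<Sum>r<N. y ((p ^^ r) (p k))) = (\<Sum>r<N. y ((p ^^ Suc r) k))"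
    by (simp only: funpow_Suc_right comp_apply)
  also have "\<dots> = (\<Sum>r<N. y ((p ^^ r) k))"
    by (rule sum_lessThan_Suc_shift_periodic) (simp add: assms)
  finally show ?thesis
    by (simp add: orbit_mean_def)
qed

lemma orbit_mean_funpow:
  assumes "(p ^^ N) = id"
  shows "orbit_mean N p y ((p ^^ n) k) = orbit_mean N p y k"
  by (induction n) (simp_all add: orbit_mean_shift[OF assms])

definition avg_step :: "real \<Rightarrow> ('b \<Rightarrow> 'b) \<Rightarrow> ('b \<Rightarrow> 'a::real_vector) \<Rightarrow> 'b \<Rightarrow> 'a" where
  "avg_step a p f k = a *\<^sub>R f k + (1 - a) *\<^sub>R f (p k)"

lemma avg_step_funpow_of_real:
  "(avg_step a p ^^ n) (\<lambda>k. of_real (y k) :: 'a::real_algebra_1) = (\<lambda>k. of_real ((avg_step a p ^^ n) y k))"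
  by (induction n) (simp_all add: avg_step_def scaleR_conv_of_real)

lemma avg_step_funpow_sum:
  "(avg_step a p ^^ n) (\<lambda>k. \<Sum>j\<in>J. F j k) = (\<lambda>k. \<Sum>j\<in>J. (avg_step a p ^^ n) (F j) k)"
  by (induction n) (simp_all add: avg_step_def scaleR_sum_right sum.distrib)

lemma avg_step_funpow_eigenvector:
  fixes E :: "'b \<Rightarrow> complex"
  assumes "\<And>k. E (p k) = w * E k"
  shows "(avg_step a p ^^ n) E = (\<lambda>k. (of_real a + of_real (1 - a) * w) ^ n * E k)"
proof (induction n)
  case (Suc n)
  then show ?case
    by (simp add: avg_step_def assms scaleR_conv_of_real algebra_simps)
qed simp

lemma norm_convex_comb_one_less_one:
  fixes z :: complex
  assumes a: "0 < a" "a < 1" and z: "norm z = 1" "z \<noteq> 1"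
  shows "norm (of_real a + of_real (1 - a) * z) < 1"
proof -
  let ?u = "of_real a :: complex" and ?v = "of_real (1 - a) * z"
  have norms: "norm ?u = a" "norm ?v = 1 - a"
    using a z by (simp_all only: norm_mult norm_of_real) simp_all
  have "norm (?u + ?v) \<noteq> norm ?u + norm ?v"
  proof
    assume "norm (?u + ?v) = norm ?u + norm ?v"
    then have "norm ?u *\<^sub>R ?v = norm ?v *\<^sub>R ?u"
      by (simp only: norm_triangle_eq)
    then have "a *\<^sub>R ?v = (1 - a) *\<^sub>R ?u"
      by (simp only: norms)
    then have "of_real (a * (1 - a)) * z = of_real (a * (1 - a))"
      by (simp add: scaleR_conv_of_real algebra_simps)
    then show False
      using a z by simp
  qed
  then show ?thesis
    using norm_triangle_ineq[of ?u ?v] norms by simp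
qed

lemma root_unity_power_neq_1:
  fixes j N :: nat
  assumes "0 < j" "j < N"
  shows "cis (2 * pi / N) ^ j \<noteq> 1"
proof
  assume "cis (2 * pi / N) ^ j = 1"
  have "inj_on (\<lambda>k. cis (2 * pi * real k / real N)) {..<N}"
    using assms by (intro bij_betw_imp_inj_on[OF Complex.bij_betw_roots_unity]) simp
  moreover have "cis (2 * pi * real j / N) = cis (2 * pi * real 0 / N)"
    using \<open>cis (2 * pi / N) ^ j = 1\<close> by (simp add: Complex.DeMoivre field_simps)
  ultimately have "j = 0"
    by (rule inj_onD) (use assms in auto)
  with assms show False
    by simp
qed

lemma root_unity_power_eq_1:
  assumes "0 < N"
  shows "cis (2 * pi / N) ^ N = 1"
  using assms by (simp add: Complex.DeMoivre complex_eq_iff)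

definition orbit_coeff :: "nat \<Rightarrow> ('b \<Rightarrow> 'b) \<Rightarrow> ('b \<Rightarrow> complex) \<Rightarrow> nat \<Rightarrow> 'b \<Rightarrow> complex" where
  "orbit_coeff N p y j k = (\<Sum>r<N. y ((p ^^ r) k) / cis (2 * pi / N) ^ (j * r)) / of_nat N"

lemma orbit_coeff_shift:
  assumes "(p ^^ N) = id" "0 < N"
  shows "orbit_coeff N p y j (p k) = cis (2 * pi / N) ^ j * orbit_coeff N p y j k"
proof -
  let ?\<zeta> = "cis (2 * pi / N)"
  define g where "g r = y ((p ^^ r) k) / ?\<zeta> ^ (j * r)" for r
  have "g N = g 0"
    by (simp add: g_def assms(1) power_mult mult.commute[of j] root_unity_power_eq_1[OF assms(2)])
  have "(\<Sum>r<N. y ((p ^^ r) (p k)) / ?\<zeta> ^ (j * r)) = (\<Sum>r<N. ?\<zeta> ^ j * g (Suc r))"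
    by (intro sum.cong refl) (simp add: g_def funpow_swap1 field_simps power_add)
  also have "\<dots> = ?\<zeta> ^ j * (\<Sum>r<N. g r)"
    by (simp add: sum_distrib_left[symmetric] sum_lessThan_Suc_shift_periodic[OF \<open>g N = g 0\<close>])
  finally show ?thesis
    by (simp add: orbit_coeff_def g_def)
qed

lemma sum_root_unity_powers:
  fixes r N :: nat
  assumes "r < N"
  shows "(\<Sum>j<N. 1 / cis (2 * pi / N) ^ (j * r)) = (if r = 0 then of_nat N else 0)"
proof (cases "r = 0")
  case False
  define u where "u = 1 / cis (2 * pi / N) ^ r"
  have "u \<noteq> 1"
    using root_unity_power_neq_1[of r N] False assms by (auto simp: u_def)
  moreover have "u ^ N = 1"
    using root_unity_power_eq_1[of N] assms
    by (simp add: u_def power_divide flip: power_mult) (simp add: power_mult mult.commute)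
  ultimately have "(\<Sum>j<N. u ^ j) = 0"
    by (simp add: geometric_sum)
  then show ?thesis
    using False by (simp add: u_def power_divide mult.commute flip: power_mult)
qed simp

lemma sum_orbit_coeff:
  assumes "0 < N"
  shows "(\<Sum>j<N. orbit_coeff N p y j k) = y k"
proof -
  have "(\<Sum>j<N. orbit_coeff N p y j k)
      = (\<Sum>r<N. y ((p ^^ r) k) * (\<Sum>j<N. 1 / cis (2 * pi / N) ^ (j * r))) / of_nat N"
    unfolding orbit_coeff_def sum_divide_distrib[symmetric] sum_distrib_left
    by (subst sum.swap) simp
  also have "\<dots> = (\<Sum>r<N. if r = 0 then of_nat N * y ((p ^^ r) k) else 0) / of_nat N"
    by (intro arg_cong[where f = "\<lambda>z. z / _"] sum.cong refl) (simp add: sum_root_unity_powers)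
  also have "\<dots> = y k"
    using assms by (simp add: sum.delta)
  finally show ?thesis .
qed

lemma avg_step_funpow_tendsto_orbit_mean_complex:
  fixes y :: "'b \<Rightarrow> complex"
  assumes a: "0 < a" "a < 1" and N: "0 < N" "(p ^^ N) = id"
  shows "(\<lambda>n. (avg_step a p ^^ n) y k) \<longlonglongrightarrow> orbit_mean N p y k"
proof -
  define ev where "ev j = of_real a + of_real (1 - a) * cis (2 * pi / N) ^ j" for j
  have expand: "(avg_step a p ^^ n) y k = (\<Sum>j<N. ev j ^ n * orbit_coeff N p y j k)" for n
  proof -
    have "(avg_step a p ^^ n) y = (avg_step a p ^^ n) (\<lambda>k. \<Sum>j<N. orbit_coeff N p y j k)"
      by (simp add: sum_orbit_coeff[OF N(1)])
    then show ?thesis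
      by (simp add: avg_step_funpow_sum ev_def
          avg_step_funpow_eigenvector[where E = "orbit_coeff N p y _", OF orbit_coeff_shift[OF N(2,1)]])
  qed
  have "(\<lambda>n. ev j ^ n * orbit_coeff N p y j k) \<longlonglongrightarrow> (if j = 0 then orbit_coeff N p y 0 k else 0)"
    if "j < N" for j
  proof (cases "j = 0")
    case False
    have "norm (ev j) < 1"
      unfolding ev_def using a root_unity_power_neq_1[of j N] False that
      by (intro norm_convex_comb_one_less_one) (auto simp: norm_power)
    then show ?thesis
      using False by (simp add: LIMSEQ_power_zero tendsto_mult_left_zero)
  qed (simp add: ev_def flip: of_real_add)
  then have "(\<lambda>n. \<Sum>j<N. ev j ^ n * orbit_coeff N p y j k)
      \<longlonglongrightarrow> (\<Sum>j<N. if j = 0 then orbit_coeff N p y 0 k else 0)"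
    by (intro tendsto_sum) simp
  moreover have "(\<Sum>j<N. if j = 0 then orbit_coeff N p y 0 k else 0) = orbit_mean N p y k"
    using N(1) by (simp add: orbit_coeff_def orbit_mean_def)
  ultimately show ?thesis
    by (simp only: expand)
qed

lemma avg_step_funpow_tendsto_orbit_mean:
  fixes y :: "'b \<Rightarrow> real"
  assumes "0 < a" "a < 1" "0 < N" "(p ^^ N) = id"
  shows "(\<lambda>n. (avg_step a p ^^ n) y k) \<longlonglongrightarrow> orbit_mean N p y k"
proof -
  have "(\<lambda>n. complex_of_real ((avg_step a p ^^ n) y k)) \<longlonglongrightarrow> complex_of_real (orbit_mean N p y k)"
    using avg_step_funpow_tendsto_orbit_mean_complex[OF assms, of "\<lambda>k. of_real (y k)" k]
    by (simp add: avg_step_funpow_of_real orbit_mean_def)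
  then show ?thesis
    by (simp only: tendsto_of_real_iff)
qed

lemma sum_atLeastAtMost_split_last:
  fixes m :: nat
  assumes "0 < m"
  shows "(\<Sum>i=1..m. f i) = (\<Sum>i=1..m-1. f i) + f m"
proof -
  have "{1..m} = insert m {1..m-1}" "m \<notin> {1..m-1}"
    using assms by auto
  then show ?thesis
    by (simp add: add.commute)
qed

lemma simplexS_lower_sum:
  assumes "0 < m" "x \<in> simplexS m"
  shows "(\<Sum>i=1..m-1. x i) = 1 - x m"
  using assms(2) sum_atLeastAtMost_split_last[OF assms(1), of x] by (simp add: simplexS_def)

lemma Vop_lower: "k \<in> {1..m-1} \<Longrightarrow> Vop m \<alpha> \<pi> x k = 2 * x m * avg_step \<alpha> \<pi> x k"
  by (simp add: Vop_def avg_step_def)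

lemma Vop_last: "Vop m \<alpha> \<pi> x m = (x m)\<^sup>2 + (\<Sum>i=1..m-1. x i)\<^sup>2"
  by (auto simp: Vop_def)

lemma Vop_outside: "0 < m \<Longrightarrow> k \<notin> {1..m} \<Longrightarrow> Vop m \<alpha> \<pi> x k = 0"
  by (auto simp: Vop_def)

lemma sum_Vop_lower:
  assumes "\<pi> permutes {1..m-1}"
  shows "(\<Sum>k=1..m-1. Vop m \<alpha> \<pi> x k) = 2 * x m * (\<Sum>k=1..m-1. x k)"
proof -
  have "(\<Sum>k=1..m-1. Vop m \<alpha> \<pi> x k)
      = (\<Sum>k=1..m-1. (2 * x m * \<alpha>) * x k + (2 * x m * (1 - \<alpha>)) * x (\<pi> k))"
    by (intro sum.cong refl) (simp add: Vop_lower avg_step_def algebra_simps)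
  also have "\<dots> = (2 * x m * \<alpha>) * (\<Sum>k=1..m-1. x k) + (2 * x m * (1 - \<alpha>)) * (\<Sum>k=1..m-1. x k)"
    using sum.permute[OF assms, of x] by (simp only: sum.distrib sum_distrib_left[symmetric] comp_def)
  finally show ?thesis
    by (simp add: algebra_simps)
qed

lemma Vop_simplexS:
  assumes "0 < m" "0 \<le> \<alpha>" "\<alpha> \<le> 1" "\<pi> permutes {1..m-1}" "x \<in> simplexS m"
  shows "Vop m \<alpha> \<pi> x \<in> simplexS m"
proof -
  have nonneg: "0 \<le> x i" if "i \<in> {1..m}" for i
    using assms(5) that by (simp add: simplexS_def)
  have "0 \<le> Vop m \<alpha> \<pi> x k" if "k \<in> {1..m}" for k
  proof (cases "k = m")
    case False
    then have k: "k \<in> {1..m-1}"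
      using that by auto
    then have "\<pi> k \<in> {1..m-1}"
      by (rule permutes_in_image[OF assms(4), THEN iffD2])
    then have "0 \<le> x (\<pi> k)"
      by (intro nonneg) auto
    then have "0 \<le> \<alpha> * x k + (1 - \<alpha>) * x (\<pi> k)"
      using assms(2,3) nonneg[OF that] by simp
    moreover have "0 \<le> x m"
      using assms(1) by (intro nonneg) simp
    ultimately show ?thesis
      using k by (simp add: Vop_lower avg_step_def)
  qed (simp add: Vop_last add_nonneg_nonneg)
  moreover have "(\<Sum>i=1..m. Vop m \<alpha> \<pi> x i) = (x m + (\<Sum>i=1..m-1. x i))\<^sup>2"
  proof -
    have "(\<Sum>i=1..m. Vop m \<alpha> \<pi> x i) = (\<Sum>i=1..m-1. Vop m \<alpha> \<pi> x i) + Vop m \<alpha> \<pi> x m"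
      by (rule sum_atLeastAtMost_split_last[OF assms(1)])
    also have "\<dots> = 2 * x m * (\<Sum>i=1..m-1. x i) + ((x m)\<^sup>2 + (\<Sum>i=1..m-1. x i)\<^sup>2)"
      by (simp only: sum_Vop_lower[OF assms(4)] Vop_last)
    finally show ?thesis
      by (simp add: power2_eq_square algebra_simps)
  qed
  moreover have "x m + (\<Sum>i=1..m-1. x i) = 1"
    using simplexS_lower_sum[OF assms(1,5)] by simp
  ultimately show ?thesis
    by (simp add: simplexS_def Vop_outside[OF assms(1)])
qed

lemma traj_0: "traj m \<alpha> \<pi> x0 0 = x0"
  by (simp add: traj_def)

lemma traj_Suc: "traj m \<alpha> \<pi> x0 (Suc n) = Vop m \<alpha> \<pi> (traj m \<alpha> \<pi> x0 n)"
  by (simp add: traj_def)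

lemma traj_simplexS:
  assumes "0 < m" "0 \<le> \<alpha>" "\<alpha> \<le> 1" "\<pi> permutes {1..m-1}" "x0 \<in> simplexS m"
  shows "traj m \<alpha> \<pi> x0 n \<in> simplexS m"
  by (induction n) (simp_all add: traj_0 traj_Suc Vop_simplexS[OF assms(1-4)] assms(5))

lemma Vop_e_last:
  assumes "\<pi> permutes {1..m-1}"
  shows "Vop m \<alpha> \<pi> (e_last m) = e_last m"
proof
  fix k
  show "Vop m \<alpha> \<pi> (e_last m) k = e_last m k"
  proof (cases "k \<in> {1..m-1}")
    case True
    moreover have "\<pi> k \<in> {1..m-1}"
      using True by (rule permutes_in_image[OF assms, THEN iffD2])
    ultimately have "k \<noteq> m" "\<pi> k \<noteq> m"
      by auto
    then show ?thesis
      using True by (simp add: Vop_lower avg_step_def e_last_def)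
  qed (auto simp: Vop_def e_last_def)
qed

lemma Vop_face:
  assumes "0 < m" "x \<in> simplexS m" "x m = 0"
  shows "Vop m \<alpha> \<pi> x = e_last m"
proof
  fix k
  have "(\<Sum>i=1..m-1. x i) = 1"
    using simplexS_lower_sum[OF assms(1,2)] assms(3) by simp
  then show "Vop m \<alpha> \<pi> x k = e_last m k"
    using assms(1,3) by (auto simp: Vop_def e_last_def)
qed

lemma traj_tendsto_e_last:
  assumes "0 < m" "\<pi> permutes {1..m-1}" "x0 \<in> Gamma m"
  shows "traj m \<alpha> \<pi> x0 \<longlonglongrightarrow> e_last m"
proof -
  have "traj m \<alpha> \<pi> x0 (Suc n) = e_last m" for n
  proof (induction n)
    case 0
    show ?case
      using assms by (auto simp: traj_Suc traj_0 Gamma_def Vop_face Vop_e_last)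
  qed (simp add: traj_Suc Vop_e_last[OF assms(2)])
  then have "(\<lambda>n. traj m \<alpha> \<pi> x0 (Suc n)) \<longlonglongrightarrow> e_last m"
    by simp
  then show ?thesis
    by (rule LIMSEQ_imp_Suc)
qed

lemma omega_set_eq_limit:
  assumes "traj m \<alpha> \<pi> x0 \<longlonglongrightarrow> b"
  shows "omega_set m \<alpha> \<pi> x0 = {b}"
proof -
  have "strict_mono (id :: nat \<Rightarrow> nat)"
    by (simp add: strict_mono_def)
  moreover have "(traj m \<alpha> \<pi> x0 \<circ> id) \<longlonglongrightarrow> b"
    using assms by simp
  moreover have "c = b" if "strict_mono r" "(traj m \<alpha> \<pi> x0 \<circ> r) \<longlonglongrightarrow> c" for r c
    using LIMSEQ_subseq_LIMSEQ[OF assms that(1)] that(2) LIMSEQ_unique by blast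
  ultimately show ?thesis
    unfolding omega_set_def by blast
qed

lemma tendsto_fun_componentwise:
  fixes X :: "nat \<Rightarrow> 'b \<Rightarrow> 'a::topological_space"
  assumes "\<And>i. (\<lambda>n. X n i) \<longlonglongrightarrow> b i"
  shows "X \<longlonglongrightarrow> b"
proof -
  have "limitin (product_topology (\<lambda>i. euclidean) UNIV) X b sequentially"
    using assms by (simp add: limitin_componentwise)
  then show ?thesis
    by (simp add: euclidean_product_topology)
qed

lemma simplexS_limit:
  assumes "\<And>n. x n \<in> simplexS m" "\<And>i. (\<lambda>n. x n i) \<longlonglongrightarrow> b i"
  shows "b \<in> simplexS m"
proof -
  have "0 \<le> b i" if "i \<in> {1..m}" for i
    using assms that by (intro tendsto_lowerbound[OF assms(2)]) (auto simp: simplexS_def)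
  moreover have "b i = 0" if "i \<notin> {1..m}" for i
    using assms that by (intro LIMSEQ_unique[OF assms(2)]) (simp add: simplexS_def)
  moreover have "(\<Sum>i=1..m. b i) = 1"
  proof (rule LIMSEQ_unique)
    show "(\<lambda>n. \<Sum>i=1..m. x n i) \<longlonglongrightarrow> (\<Sum>i=1..m. b i)"
      by (intro tendsto_sum assms(2))
    show "(\<lambda>n. \<Sum>i=1..m. x n i) \<longlonglongrightarrow> 1"
      using assms(1) by (simp add: simplexS_def)
  qed
  ultimately show ?thesis
    by (simp add: simplexS_def)
qed

lemma tendsto_half_of_quadratic_iteration:
  fixes t :: "nat \<Rightarrow> real"
  assumes rec: "\<And>n. t (Suc n) = (t n)\<^sup>2 + (1 - t n)\<^sup>2" and "0 < t 0" "t 0 < 1"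
  shows "t \<longlonglongrightarrow> 1/2"
proof -
  define c where "c = 2 * t 0 - 1"
  have closed_form: "2 * t n - 1 = c ^ (2 ^ n)" for n
  proof (induction n)
    case (Suc n)
    have "2 * t (Suc n) - 1 = (2 * t n - 1)\<^sup>2"
      by (simp add: rec power2_eq_square algebra_simps)
    then show ?case
      by (simp add: Suc.IH flip: power_mult) (simp add: mult.commute)
  qed (simp add: c_def)
  have "(\<lambda>n. c ^ n) \<longlonglongrightarrow> 0"
    using assms(2,3) by (intro LIMSEQ_power_zero) (simp add: c_def)
  moreover have "strict_mono (\<lambda>n::nat. 2 ^ n :: nat)"
    by (simp add: strict_mono_def)
  ultimately have "(\<lambda>n. c ^ (2 ^ n)) \<longlonglongrightarrow> 0"
    using LIMSEQ_subseq_LIMSEQ by (fastforce simp: comp_def)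
  then have "(\<lambda>n. (1 + c ^ (2 ^ n)) / 2) \<longlonglongrightarrow> (1 + 0) / 2"
    by (intro tendsto_intros) simp_all
  moreover have "t = (\<lambda>n. (1 + c ^ (2 ^ n)) / 2)"
    using closed_form by (auto simp: field_simps)
  ultimately show ?thesis
    by simp
qed

lemma traj_last_tendsto_half:
  assumes "0 < m" "0 \<le> \<alpha>" "\<alpha> \<le> 1" "\<pi> permutes {1..m-1}" "x0 \<in> simplexS m"
    and "0 < x0 m" "x0 m < 1"
  shows "(\<lambda>n. traj m \<alpha> \<pi> x0 n m) \<longlonglongrightarrow> 1/2"
proof (rule tendsto_half_of_quadratic_iteration)
  fix n
  have "traj m \<alpha> \<pi> x0 (Suc n) m = (traj m \<alpha> \<pi> x0 n m)\<^sup>2 + (\<Sum>i=1..m-1. traj m \<alpha> \<pi> x0 n i)\<^sup>2"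
    by (simp only: traj_Suc Vop_last)
  also have "(\<Sum>i=1..m-1. traj m \<alpha> \<pi> x0 n i) = 1 - traj m \<alpha> \<pi> x0 n m"
    by (rule simplexS_lower_sum[OF assms(1) traj_simplexS[OF assms(1-5)]])
  finally show "traj m \<alpha> \<pi> x0 (Suc n) m = (traj m \<alpha> \<pi> x0 n m)\<^sup>2 + (1 - traj m \<alpha> \<pi> x0 n m)\<^sup>2" .
next
  show "0 < traj m \<alpha> \<pi> x0 0 m" "traj m \<alpha> \<pi> x0 0 m < 1"
    using assms(6,7) by (simp_all only: traj_0)
qed

lemma traj_lower_scaling:
  assumes "\<pi> permutes {1..m-1}" "k \<in> {1..m-1}"
  shows "traj m \<alpha> \<pi> x0 n k * (\<Sum>i=1..m-1. x0 i)
       = (\<Sum>i=1..m-1. traj m \<alpha> \<pi> x0 n i) * (avg_step \<alpha> \<pi> ^^ n) x0 k"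
  using assms(2)
proof (induction n arbitrary: k)
  case (Suc n)
  let ?x = "traj m \<alpha> \<pi> x0 n" and ?y = "(avg_step \<alpha> \<pi> ^^ n) x0"
  let ?S = "\<Sum>i=1..m-1. x0 i" and ?s = "\<Sum>i=1..m-1. ?x i"
  have "\<pi> k \<in> {1..m-1}"
    using Suc.prems by (rule permutes_in_image[OF assms(1), THEN iffD2])
  then have step: "avg_step \<alpha> \<pi> ?x k * ?S = ?s * avg_step \<alpha> \<pi> ?y k"
    using Suc.IH[of k] Suc.IH[of "\<pi> k"] Suc.prems
    by (simp add: avg_step_def[of _ _ ?x] avg_step_def[of _ _ ?y] algebra_simps)
  have "traj m \<alpha> \<pi> x0 (Suc n) k * ?S = 2 * ?x m * (avg_step \<alpha> \<pi> ?x k * ?S)"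
    using Suc.prems by (simp add: traj_Suc Vop_lower)
  also have "\<dots> = (2 * ?x m * ?s) * avg_step \<alpha> \<pi> ?y k"
    by (simp only: step mult.assoc)
  also have "\<dots> = (\<Sum>i=1..m-1. traj m \<alpha> \<pi> x0 (Suc n) i) * (avg_step \<alpha> \<pi> ^^ Suc n) x0 k"
    using sum_Vop_lower[OF assms(1), of \<alpha> ?x] by (simp add: traj_Suc)
  finally show ?case .
qed (simp add: traj_0)

lemma traj_lower_tendsto:
  assumes m: "0 < m" and \<alpha>: "0 < \<alpha>" "\<alpha> < 1" and \<pi>: "\<pi> permutes {1..m-1}"
    and x0: "x0 \<in> simplexS m" "0 < x0 m" "x0 m < 1"
    and N: "0 < N" "(\<pi> ^^ N) = id" and k: "k \<in> {1..m-1}"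
  shows "(\<lambda>n. traj m \<alpha> \<pi> x0 n k) \<longlonglongrightarrow> orbit_mean N \<pi> x0 k / (2 * (1 - x0 m))"
proof -
  let ?x = "traj m \<alpha> \<pi> x0"
  have \<alpha>': "0 \<le> \<alpha>" "\<alpha> \<le> 1"
    using \<alpha> by simp_all
  have scaling: "?x n k * (1 - x0 m) = (1 - ?x n m) * (avg_step \<alpha> \<pi> ^^ n) x0 k" for n
    using traj_lower_scaling[OF \<pi> k, of \<alpha> x0 n] simplexS_lower_sum[OF m x0(1)]
      simplexS_lower_sum[OF m traj_simplexS[OF m \<alpha>' \<pi> x0(1)]]
    by simp
  have "(\<lambda>n. (1 - ?x n m) * (avg_step \<alpha> \<pi> ^^ n) x0 k / (1 - x0 m))
      \<longlonglongrightarrow> (1 - 1/2) * orbit_mean N \<pi> x0 k / (1 - x0 m)"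
    using traj_last_tendsto_half[OF m \<alpha>' \<pi> x0] avg_step_funpow_tendsto_orbit_mean[OF \<alpha> N] x0(3)
    by (intro tendsto_divide tendsto_mult tendsto_diff tendsto_const) simp_all
  moreover have "?x n k = (1 - ?x n m) * (avg_step \<alpha> \<pi> ^^ n) x0 k / (1 - x0 m)" for n
    using scaling[of n] x0(3) by (simp add: field_simps)
  ultimately show ?thesis
    by simp
qed

lemma simplexS_diff_Gamma_last:
  assumes m: "0 < m" and x: "x \<in> simplexS m - Gamma m"
  shows "0 < x m" "x m < 1"
proof -
  have xS: "x \<in> simplexS m" and "x m \<noteq> 0" "x \<noteq> e_last m"
    using x by (auto simp: Gamma_def)
  have nonneg: "0 \<le> x i" if "i \<in> {1..m}" for i
    using xS that by (simp add: simplexS_def)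
  show "0 < x m"
    using nonneg[of m] m \<open>x m \<noteq> 0\<close> by simp
  show "x m < 1"
  proof (rule ccontr)
    assume "\<not> x m < 1"
    have lower_nonneg: "\<forall>i\<in>{1..m-1}. 0 \<le> x i"
      by (auto intro!: nonneg)
    have "(\<Sum>i=1..m-1. x i) \<le> 0"
      using simplexS_lower_sum[OF m xS] \<open>\<not> x m < 1\<close> by simp
    then have "(\<Sum>i=1..m-1. x i) = 0"
      using sum_nonneg[of "{1..m-1}" x] lower_nonneg by fastforce
    then have lower: "\<forall>i\<in>{1..m-1}. x i = 0"
      using sum_nonneg_eq_0_iff[of "{1..m-1}" x] lower_nonneg by simp
    have "x = e_last m"
    proof
      fix i
      show "x i = e_last m i"
        using xS lower simplexS_lower_sum[OF m xS] sum.neutral[of "{1..m-1}" x]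
        by (cases "i \<in> {1..m-1}") (auto simp: e_last_def simplexS_def)
    qed
    with \<open>x \<noteq> e_last m\<close> show False ..
  qed
qed

definition limit_point :: "nat \<Rightarrow> (nat \<Rightarrow> nat) \<Rightarrow> nat \<Rightarrow> (nat \<Rightarrow> real) \<Rightarrow> nat \<Rightarrow> real" where
  "limit_point m \<pi> N x0 i =
     (if i \<in> {1..m-1} then orbit_mean N \<pi> x0 i / (2 * (1 - x0 m)) else if i = m then 1/2 else 0)"

lemma limit_point_last:
  assumes "0 < m"
  shows "limit_point m \<pi> N x0 m = 1/2"
proof -
  have "m \<notin> {1..m-1}"
    using assms by auto
  then show ?thesis
    unfolding limit_point_def by (simp only: if_not_P) simp
qed

lemma traj_tendsto_limit_point:
  assumes m: "0 < m" and \<alpha>: "0 < \<alpha>" "\<alpha> < 1" and \<pi>: "\<pi> permutes {1..m-1}"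
    and x0: "x0 \<in> simplexS m" "0 < x0 m" "x0 m < 1" and N: "0 < N" "(\<pi> ^^ N) = id"
  shows "(\<lambda>n. traj m \<alpha> \<pi> x0 n i) \<longlonglongrightarrow> limit_point m \<pi> N x0 i"
proof -
  have \<alpha>': "0 \<le> \<alpha>" "\<alpha> \<le> 1"
    using \<alpha> by simp_all
  consider "i \<in> {1..m-1}" | "i = m" | "i \<notin> {1..m}"
    by fastforce
  then show ?thesis
  proof cases
    case 1
    then show ?thesis
      using traj_lower_tendsto[OF m \<alpha> \<pi> x0 N 1] by (simp add: limit_point_def)
  next
    case 2
    show ?thesis
      unfolding 2 limit_point_last[OF m] by (rule traj_last_tendsto_half[OF m \<alpha>' \<pi> x0])
  next
    case 3
    then have "traj m \<alpha> \<pi> x0 n i = 0" for n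
      using traj_simplexS[OF m \<alpha>' \<pi> x0(1)] by (simp add: simplexS_def)
    moreover have "i \<notin> {1..m-1}" "i \<noteq> m"
      using 3 m by auto
    then have "limit_point m \<pi> N x0 i = 0"
      unfolding limit_point_def by (simp only: if_not_P if_False)
    ultimately show ?thesis
      by simp
  qed
qed

lemma limit_point_Xset:
  fixes \<alpha> :: real
  assumes m: "0 < m" and \<alpha>: "0 < \<alpha>" "\<alpha> < 1" and \<pi>: "\<pi> permutes {1..m-1}"
    and x0: "x0 \<in> simplexS m" "0 < x0 m" "x0 m < 1" and N: "0 < N" "(\<pi> ^^ N) = id"
  shows "limit_point m \<pi> N x0 \<in> Xset m \<pi>"
  unfolding Xset_def
proof (intro CollectI conjI ballI impI)
  show "limit_point m \<pi> N x0 \<in> simplexS m"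
    using traj_simplexS[OF m _ _ \<pi> x0(1)] \<alpha>
    by (intro simplexS_limit[OF _ traj_tendsto_limit_point[OF assms]]) simp
  show "limit_point m \<pi> N x0 m = 1/2"
    by (rule limit_point_last[OF m])
  fix k l
  assume "k \<in> {1..m-1}" "l \<in> {1..m-1}" "same_cycle \<pi> k l"
  moreover from \<open>same_cycle \<pi> k l\<close> obtain n where "(\<pi> ^^ n) k = l"
    unfolding same_cycle_def by blast
  then have "orbit_mean N \<pi> x0 l = orbit_mean N \<pi> x0 k"
    using orbit_mean_funpow[OF N(2)] by metis
  ultimately show "limit_point m \<pi> N x0 k = limit_point m \<pi> N x0 l"
    by (simp add: limit_point_def)
qed

lemma traj_tendsto_Xset:
  assumes m: "0 < m" and \<alpha>: "0 < \<alpha>" "\<alpha> < 1" and \<pi>: "\<pi> permutes {1..m-1}"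
    and x0: "x0 \<in> simplexS m - Gamma m"
  shows "\<exists>b\<in>Xset m \<pi>. traj m \<alpha> \<pi> x0 \<longlonglongrightarrow> b"
proof -
  have x0S: "x0 \<in> simplexS m"
    using x0 by simp
  note x0_last = simplexS_diff_Gamma_last[OF m x0]
  obtain N where N: "0 < N" "(\<pi> ^^ N) = id"
    using permutation_is_nilpotent \<pi> permutation_permutes by blast
  have "traj m \<alpha> \<pi> x0 \<longlonglongrightarrow> limit_point m \<pi> N x0"
    by (rule tendsto_fun_componentwise) (rule traj_tendsto_limit_point[OF m \<alpha> \<pi> x0S x0_last N])
  then show ?thesis
    using limit_point_Xset[OF m \<alpha> \<pi> x0S x0_last N] by blast
qed

theorem theorem2:
  fixes m :: nat and \<alpha> :: real and \<pi> :: "nat \<Rightarrow> nat"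
  assumes "m \<ge> 2" and "0 \<le> \<alpha>" and "\<alpha> \<le> 1" and "\<pi> permutes {1..m-1}"
  shows "(\<forall>x0\<in>Gamma m. omega_set m \<alpha> \<pi> x0 = {e_last m})
       \<and> (0 < \<alpha> \<and> \<alpha> < 1 \<and> \<pi> \<noteq> id \<longrightarrow>
            (\<forall>x0 \<in> simplexS m - (Gamma m \<union> Xset m \<pi>).
                \<exists>b\<in>Xset m \<pi>. omega_set m \<alpha> \<pi> x0 = {b}))"
proof -
  have m: "0 < m"
    using assms(1) by simp
  have "omega_set m \<alpha> \<pi> x0 = {e_last m}" if "x0 \<in> Gamma m" for x0
    using traj_tendsto_e_last[OF m assms(4) that] by (rule omega_set_eq_limit)
  moreover have "\<exists>b\<in>Xset m \<pi>. omega_set m \<alpha> \<pi> x0 = {b}"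
    if "0 < \<alpha>" "\<alpha> < 1" "x0 \<in> simplexS m - Gamma m" for x0
    using traj_tendsto_Xset[OF m that(1,2) assms(4) that(3)] omega_set_eq_limit by blast
  ultimately show ?thesis
    by blast
qed

end
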